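(* Let $R$ be a unital ring and let $(P,Q,\psi)$ be a unital $R$-system. Suppose that $(S,T,\sigma,B)$ is a semi-full covariant representation of $(P,Q,\psi)$, that $(P,Q,\psi)$ satisfies Condition (FS'), and that the ideal $I^{(k)}_{\psi,\sigma}$ of $B_0$ is unital (has a multiplicative identity) for every $k\ge0$. Then $B$ is epsilon-strongly $\mathbb{Z}$-graded.
   Context: For additive subsets $X,Y$ of a ring, $XY$ is the additive subgroup generated by products $xy$. For rings $A,B$, an $A$-$B$-bimodule $M$ is unital if there exist $a\in A,b\in B$ with $ax=x=xb$ for all $x\in M$. A $\mathbb{Z}$-graded ring $B=\bigoplus_iB_i$ is epsilon-strongly graded if each $B_i$ is a unital $B_iB_{-i}$-$B_{-i}B_i$-bimodule. An $R$-system is a triple $(P,Q,\psi)$ with $P,Q$ $R$-bimodules and $\psi:P\otimes_RQ\to R$ an $R$-bimodule homomorphism; it is unital if $R$ is unital and $1_R$ acts as identity on both sides of $P$ and $Q$. Put $P^{\otimes0}=Q^{\otimes0}=R$, $\psi_0(r\otimes r')=rr'$, $\psi_1=\psi$, and for $n>1$: $Q^{\otimes n}=Q^{\otimes(n-1)}\otimes_RQ$, $P^{\otimes n}=P\otimes_RP^{\otimes(n-1)}$, $\psi_n((p_1\otimes p_2)\otimes(q_2\otimes q_1))=\psi(p_1\psi_{n-1}(p_2\otimes q_2)\otimes q_1)$. A covariant representation is a tuple $(S,T,\sigma,B)$ with $B$ a ring, $S:P\to B$, $T:Q\to B$ additive maps, $\sigma:R\to B$ a ring homomorphism, with $S(pr)=S(p)\sigma(r)$,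 $S(rp)=\sigma(r)S(p)$, $T(qr)=T(q)\sigma(r)$, $T(rq)=\sigma(r)T(q)$, $\sigma(\psi(p\otimes q))=S(p)T(q)$. It is graded if $B$ is generated as a ring by $\sigma(R)\cup S(P)\cup T(Q)$ and $B$ carries a $\mathbb{Z}$-grading with $\sigma(R)\subseteq B_0$, $T(Q)\subseteq B_1$, $S(P)\subseteq B_{-1}$. For a graded covariant representation and $k\ge0$, $I^{(k)}_{\psi,\sigma}$ is the ideal of $B_0$ generated by $\{\sigma(\psi_k(p\otimes q)):p\in P^{\otimes k},q\in Q^{\otimes k}\}$; the (graded) representation is semi-full if $B_{-k}B_k=I^{(k)}_{\psi,\sigma}$ for all $k\ge0$. For $q\in Q,p\in P$ let $\theta_{q,p}(x)=q\psi(p\otimes x)$ ($x\in Q$) and $\theta_{p,q}(y)=\psi(y\otimes q)p$ ($y\in P$); $\mathcal{F}_P(Q)$, $\mathcal{F}_Q(P)$ are the additive groups generated by these maps. Condition (FS'): there exist $\Theta\in\mathcal{F}_P(Q)$, $\Phi\in\mathcal{F}_Q(P)$ with $\Theta(q)=q$ and $\Phi(p)=p$ for all $q\in Q,p\in P$. *)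

theory Defs
  imports Main
begin

inductive_set add_span :: "'a::ab_group_add set \<Rightarrow> 'a set" for G where
  add_span_gen: "x \<in> G \<Longrightarrow> x \<in> add_span G"
| add_span_zero: "0 \<in> add_span G"
| add_span_add: "x \<in> add_span G \<Longrightarrow> y \<in> add_span G \<Longrightarrow> x + y \<in> add_span G"
| add_span_neg: "x \<in> add_span G \<Longrightarrow> - x \<in> add_span G"

definition set_prod :: "'b::ring set \<Rightarrow> 'b set \<Rightarrow> 'b set" where
  "set_prod X Y = add_span {x * y | x y. x \<in> X \<and> y \<in> Y}"

inductive_set subring_gen :: "'b::ring set \<Rightarrow> 'b set" for G where
  subring_gen_gen: "x \<in> G \<Longrightarrow> x \<in> subring_gen G"
| subring_gen_zero: "0 \<in> subring_gen G"
| subring_gen_add: "x \<in> subring_gen G \<Longrightarrow> y \<in> subring_gen G \<Longrightarrow> x + y \<in> subring_gen G"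
| subring_gen_neg: "x \<in> subring_gen G \<Longrightarrow> - x \<in> subring_gen G"
| subring_gen_mult: "x \<in> subring_gen G \<Longrightarrow> y \<in> subring_gen G \<Longrightarrow> x * y \<in> subring_gen G"

inductive_set ideal_gen :: "'b::ring set \<Rightarrow> 'b set \<Rightarrow> 'b set" for A G where
  ideal_gen_gen: "x \<in> G \<Longrightarrow> x \<in> ideal_gen A G"
| ideal_gen_zero: "0 \<in> ideal_gen A G"
| ideal_gen_add: "x \<in> ideal_gen A G \<Longrightarrow> y \<in> ideal_gen A G \<Longrightarrow> x + y \<in> ideal_gen A G"
| ideal_gen_neg: "x \<in> ideal_gen A G \<Longrightarrow> - x \<in> ideal_gen A G"
| ideal_gen_lmult: "a \<in> A \<Longrightarrow> x \<in> ideal_gen A G \<Longrightarrow> a * x \<in> ideal_gen A G"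
| ideal_gen_rmult: "a \<in> A \<Longrightarrow> x \<in> ideal_gen A G \<Longrightarrow> x * a \<in> ideal_gen A G"

definition has_unit :: "'b::ring set \<Rightarrow> bool" where
  "has_unit I \<longleftrightarrow> (\<exists>e\<in>I. \<forall>x\<in>I. e * x = x \<and> x * e = x)"

(* B (the whole type 'b) is the internal direct sum of the additive subgroups Bg i,
   with Bg i * Bg j \<subseteq> Bg (i + j) *)
definition Z_graded :: "(int \<Rightarrow> 'b::ring set) \<Rightarrow> bool" where
  "Z_graded Bg \<longleftrightarrow>
     (\<forall>i. 0 \<in> Bg i \<and> (\<forall>x\<in>Bg i. \<forall>y\<in>Bg i. x + y \<in> Bg i) \<and> (\<forall>x\<in>Bg i. - x \<in> Bg i)) \<and>
     (\<forall>i j x y. x \<in> Bg i \<longrightarrow> y \<in> Bg j \<longrightarrow> x * y \<in> Bg (i + j)) \<and>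
     (\<forall>b. \<exists>c. finite {i. c i \<noteq> 0} \<and> (\<forall>i. c i \<in> Bg i) \<and> b = sum c {i. c i \<noteq> 0}) \<and>
     (\<forall>c. finite {i. c i \<noteq> 0} \<longrightarrow> (\<forall>i. c i \<in> Bg i) \<longrightarrow> sum c {i. c i \<noteq> 0} = 0
          \<longrightarrow> (\<forall>i. c i = 0))"

(* each B_i is a unital B_i B_{-i} - B_{-i} B_i bimodule *)
definition epsilon_strongly_graded :: "(int \<Rightarrow> 'b::ring set) \<Rightarrow> bool" where
  "epsilon_strongly_graded Bg \<longleftrightarrow> Z_graded Bg \<and>
     (\<forall>i. \<exists>a\<in>set_prod (Bg i) (Bg (- i)). \<exists>b\<in>set_prod (Bg (- i)) (Bg i).
            \<forall>x\<in>Bg i. a * x = x \<and> x * b = x)"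

definition bimodule :: "('r::ring_1 \<Rightarrow> 'm::ab_group_add \<Rightarrow> 'm) \<Rightarrow> ('m \<Rightarrow> 'r \<Rightarrow> 'm) \<Rightarrow> bool" where
  "bimodule l r \<longleftrightarrow>
     (\<forall>a x y. l a (x + y) = l a x + l a y) \<and> (\<forall>a b x. l (a + b) x = l a x + l b x) \<and>
     (\<forall>a b x. l (a * b) x = l a (l b x)) \<and>
     (\<forall>a x y. r (x + y) a = r x a + r y a) \<and> (\<forall>a b x. r x (a + b) = r x a + r x b) \<and>
     (\<forall>a b x. r x (a * b) = r (r x a) b) \<and>
     (\<forall>a b x. l a (r x b) = r (l a x) b)"

definition unital_bimodule :: "('r::ring_1 \<Rightarrow> 'm::ab_group_add \<Rightarrow> 'm) \<Rightarrow> ('m \<Rightarrow> 'r \<Rightarrow> 'm) \<Rightarrow> bool" where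
  "unital_bimodule l r \<longleftrightarrow> bimodule l r \<and> (\<forall>x. l 1 x = x) \<and> (\<forall>x. r x 1 = x)"

(* psi : P \<otimes>_R Q \<rightarrow> R an R-bimodule homomorphism, represented (universal property of
   the balanced tensor product) as an R-balanced biadditive map P \<times> Q \<rightarrow> R that is
   left R-linear in P and right R-linear in Q *)
definition balanced_bimod_map ::
  "('r::ring_1 \<Rightarrow> 'p::ab_group_add \<Rightarrow> 'p) \<Rightarrow> ('p \<Rightarrow> 'r \<Rightarrow> 'p) \<Rightarrow>
   ('r \<Rightarrow> 'q::ab_group_add \<Rightarrow> 'q) \<Rightarrow> ('q \<Rightarrow> 'r \<Rightarrow> 'q) \<Rightarrow> ('p \<Rightarrow> 'q \<Rightarrow> 'r) \<Rightarrow> bool" where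
  "balanced_bimod_map lP rP lQ rQ \<psi> \<longleftrightarrow>
     (\<forall>p p' q. \<psi> (p + p') q = \<psi> p q + \<psi> p' q) \<and>
     (\<forall>p q q'. \<psi> p (q + q') = \<psi> p q + \<psi> p q') \<and>
     (\<forall>p a q. \<psi> (rP p a) q = \<psi> p (lQ a q)) \<and>
     (\<forall>a p q. \<psi> (lP a p) q = a * \<psi> p q) \<and>
     (\<forall>p q a. \<psi> p (rQ q a) = \<psi> p q * a)"

definition unital_R_system ::
  "('r::ring_1 \<Rightarrow> 'p::ab_group_add \<Rightarrow> 'p) \<Rightarrow> ('p \<Rightarrow> 'r \<Rightarrow> 'p) \<Rightarrow>
   ('r \<Rightarrow> 'q::ab_group_add \<Rightarrow> 'q) \<Rightarrow> ('q \<Rightarrow> 'r \<Rightarrow> 'q) \<Rightarrow> ('p \<Rightarrow> 'q \<Rightarrow> 'r) \<Rightarrow> bool" where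
  "unital_R_system lP rP lQ rQ \<psi> \<longleftrightarrow>
     unital_bimodule lP rP \<and> unital_bimodule lQ rQ \<and> balanced_bimod_map lP rP lQ rQ \<psi>"

(* psi_n on elementary tensors: for p = p_1 \<otimes> (p_2 \<otimes> ... \<otimes> p_n) and
   q = (q_n \<otimes> ... \<otimes> q_2) \<otimes> q_1 (lists [p_1,...,p_n], [q_1,...,q_n]):
   psi_1(p_1 \<otimes> q_1) = psi(p_1 \<otimes> q_1),
   psi_n = psi(p_1 psi_{n-1}(p_2... \<otimes> q_2...) \<otimes> q_1) *)
fun psi_elem :: "('p \<Rightarrow> 'r \<Rightarrow> 'p) \<Rightarrow> ('p \<Rightarrow> 'q \<Rightarrow> 'r) \<Rightarrow> 'p list \<Rightarrow> 'q list \<Rightarrow> 'r" where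
  "psi_elem rP \<psi> [p] [q] = \<psi> p q"
| "psi_elem rP \<psi> (p # ps) (q # qs) = \<psi> (rP p (psi_elem rP \<psi> ps qs)) q"
| "psi_elem rP \<psi> _ _ = undefined"

(* generators of I^{(k)}: the sigma-images of psi_k on (elementary) tensors;
   k = 0: psi_0(r \<otimes> r') = r r' *)
definition psi_gens :: "('p \<Rightarrow> 'r::ring_1 \<Rightarrow> 'p) \<Rightarrow> ('p \<Rightarrow> 'q \<Rightarrow> 'r) \<Rightarrow> nat \<Rightarrow> 'r set" where
  "psi_gens rP \<psi> k =
     (if k = 0 then {r * r' | r r'. True}
      else {psi_elem rP \<psi> ps qs | ps qs. length ps = k \<and> length qs = k})"

definition I_psi_sigma ::
  "(int \<Rightarrow> 'b::ring set) \<Rightarrow> ('r::ring_1 \<Rightarrow> 'b) \<Rightarrow> ('p \<Rightarrow> 'r \<Rightarrow> 'p) \<Rightarrow> ('p \<Rightarrow> 'q \<Rightarrow> 'r) \<Rightarrow> nat \<Rightarrow> 'b set" where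
  "I_psi_sigma Bg \<sigma> rP \<psi> k = ideal_gen (Bg 0) (\<sigma> ` psi_gens rP \<psi> k)"

definition covariant_rep ::
  "('r::ring_1 \<Rightarrow> 'p::ab_group_add \<Rightarrow> 'p) \<Rightarrow> ('p \<Rightarrow> 'r \<Rightarrow> 'p) \<Rightarrow>
   ('r \<Rightarrow> 'q::ab_group_add \<Rightarrow> 'q) \<Rightarrow> ('q \<Rightarrow> 'r \<Rightarrow> 'q) \<Rightarrow> ('p \<Rightarrow> 'q \<Rightarrow> 'r) \<Rightarrow>
   ('p \<Rightarrow> 'b::ring) \<Rightarrow> ('q \<Rightarrow> 'b) \<Rightarrow> ('r \<Rightarrow> 'b) \<Rightarrow> bool" where
  "covariant_rep lP rP lQ rQ \<psi> S T \<sigma> \<longleftrightarrow>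
     (\<forall>p p'. S (p + p') = S p + S p') \<and>
     (\<forall>q q'. T (q + q') = T q + T q') \<and>
     (\<forall>a b. \<sigma> (a + b) = \<sigma> a + \<sigma> b) \<and> (\<forall>a b. \<sigma> (a * b) = \<sigma> a * \<sigma> b) \<and>
     (\<forall>p a. S (rP p a) = S p * \<sigma> a) \<and> (\<forall>a p. S (lP a p) = \<sigma> a * S p) \<and>
     (\<forall>q a. T (rQ q a) = T q * \<sigma> a) \<and> (\<forall>a q. T (lQ a q) = \<sigma> a * T q) \<and>
     (\<forall>p q. \<sigma> (\<psi> p q) = S p * T q)"

(* graded covariant representation; the ring B is the whole type 'b *)
definition graded_covariant_rep ::
  "('r::ring_1 \<Rightarrow> 'p::ab_group_add \<Rightarrow> 'p) \<Rightarrow> ('p \<Rightarrow> 'r \<Rightarrow> 'p) \<Rightarrow>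
   ('r \<Rightarrow> 'q::ab_group_add \<Rightarrow> 'q) \<Rightarrow> ('q \<Rightarrow> 'r \<Rightarrow> 'q) \<Rightarrow> ('p \<Rightarrow> 'q \<Rightarrow> 'r) \<Rightarrow>
   ('p \<Rightarrow> 'b::ring) \<Rightarrow> ('q \<Rightarrow> 'b) \<Rightarrow> ('r \<Rightarrow> 'b) \<Rightarrow> (int \<Rightarrow> 'b set) \<Rightarrow> bool" where
  "graded_covariant_rep lP rP lQ rQ \<psi> S T \<sigma> Bg \<longleftrightarrow>
     covariant_rep lP rP lQ rQ \<psi> S T \<sigma> \<and>
     subring_gen (range \<sigma> \<union> range S \<union> range T) = UNIV \<and>
     Z_graded Bg \<and>
     range \<sigma> \<subseteq> Bg 0 \<and> range T \<subseteq> Bg 1 \<and> range S \<subseteq> Bg (-1)"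

definition semi_full_rep ::
  "('r::ring_1 \<Rightarrow> 'p::ab_group_add \<Rightarrow> 'p) \<Rightarrow> ('p \<Rightarrow> 'r \<Rightarrow> 'p) \<Rightarrow>
   ('r \<Rightarrow> 'q::ab_group_add \<Rightarrow> 'q) \<Rightarrow> ('q \<Rightarrow> 'r \<Rightarrow> 'q) \<Rightarrow> ('p \<Rightarrow> 'q \<Rightarrow> 'r) \<Rightarrow>
   ('p \<Rightarrow> 'b::ring) \<Rightarrow> ('q \<Rightarrow> 'b) \<Rightarrow> ('r \<Rightarrow> 'b) \<Rightarrow> (int \<Rightarrow> 'b set) \<Rightarrow> bool" where
  "semi_full_rep lP rP lQ rQ \<psi> S T \<sigma> Bg \<longleftrightarrow>
     graded_covariant_rep lP rP lQ rQ \<psi> S T \<sigma> Bg \<and>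
     (\<forall>k::nat. set_prod (Bg (- int k)) (Bg (int k)) = I_psi_sigma Bg \<sigma> rP \<psi> k)"

inductive_set fun_span :: "('a \<Rightarrow> 'm::ab_group_add) set \<Rightarrow> ('a \<Rightarrow> 'm) set" for G where
  fun_span_gen: "f \<in> G \<Longrightarrow> f \<in> fun_span G"
| fun_span_zero: "(\<lambda>_. 0) \<in> fun_span G"
| fun_span_add: "f \<in> fun_span G \<Longrightarrow> g \<in> fun_span G \<Longrightarrow> (\<lambda>x. f x + g x) \<in> fun_span G"
| fun_span_neg: "f \<in> fun_span G \<Longrightarrow> (\<lambda>x. - f x) \<in> fun_span G"

definition F_P_Q :: "('q \<Rightarrow> 'r \<Rightarrow> 'q::ab_group_add) \<Rightarrow> ('p \<Rightarrow> 'q \<Rightarrow> 'r) \<Rightarrow> ('q \<Rightarrow> 'q) set" where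
  "F_P_Q rQ \<psi> = fun_span {(\<lambda>x. rQ q (\<psi> p x)) | q p. True}"

definition F_Q_P :: "('r \<Rightarrow> 'p::ab_group_add \<Rightarrow> 'p) \<Rightarrow> ('p \<Rightarrow> 'q \<Rightarrow> 'r) \<Rightarrow> ('p \<Rightarrow> 'p) set" where
  "F_Q_P lP \<psi> = fun_span {(\<lambda>y. lP (\<psi> y q) p) | p q. True}"

definition condition_FS' ::
  "('r \<Rightarrow> 'p::ab_group_add \<Rightarrow> 'p) \<Rightarrow> ('q \<Rightarrow> 'r \<Rightarrow> 'q::ab_group_add) \<Rightarrow> ('p \<Rightarrow> 'q \<Rightarrow> 'r) \<Rightarrow> bool" where
  "condition_FS' lP rQ \<psi> \<longleftrightarrow>
     (\<exists>\<Theta>\<in>F_P_Q rQ \<psi>. \<exists>\<Phi>\<in>F_Q_P lP \<psi>. (\<forall>q. \<Theta> q = q) \<and> (\<forall>p. \<Phi> p = p))"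

end

theory Submission
  imports Defs "HOL-Library.Groups_Big_Fun"
begin

text \<open>
  Since \<open>B\<close> is generated by \<open>\<sigma>(R)\<close>, \<open>S(P)\<close> and \<open>T(Q)\<close>, which are homogeneous of
  degrees \<open>0\<close>, \<open>-1\<close> and \<open>1\<close>, comparing homogeneous components shows that
  \<open>B\<^sub>k \<subseteq> T(Q)\<^sup>k B\<close> and \<open>B\<^sub>-\<^sub>k \<subseteq> B S(P)\<^sup>k\<close> for \<open>k \<ge> 0\<close>.
  Condition (FS') yields \<open>u = \<Sum> t\<^sub>i s\<^sub>i \<in> T(Q)S(P)\<close> acting as a left identity on \<open>T(Q)\<close>.
  If \<open>a \<in> B\<^sub>kB\<^sub>-\<^sub>k\<close> is a left identity on \<open>T(Q)\<^sup>k B\<close>, then so is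
  \<open>\<Sum> t\<^sub>i a s\<^sub>i \<in> B\<^sub>k\<^sub>+\<^sub>1B\<^sub>-\<^sub>k\<^sub>-\<^sub>1\<close> on \<open>T(Q)\<^sup>k\<^sup>+\<^sup>1 B\<close>, because
  \<open>S(P) T(Q) \<subseteq> \<sigma>(R)\<close>; symmetrically for right identities on \<open>B S(P)\<^sup>k\<close>.
  The remaining one-sided identities come from the unit \<open>e\<close> of \<open>B\<^sub>-\<^sub>kB\<^sub>k = I\<^sup>(\<^sup>k\<^sup>)\<close>:
  for \<open>x \<in> B\<^sub>k\<close> we get \<open>x e = a x e = a x = x\<close>, since \<open>B\<^sub>-\<^sub>k x \<subseteq> B\<^sub>-\<^sub>kB\<^sub>k\<close>.
\<close>

definition add_subgroup :: "'a::ab_group_add set \<Rightarrow> bool" where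
  "add_subgroup H \<longleftrightarrow> 0 \<in> H \<and> (\<forall>x\<in>H. \<forall>y\<in>H. x + y \<in> H) \<and> (\<forall>x\<in>H. - x \<in> H)"

lemma add_subgroupD:
  assumes "add_subgroup H"
  shows add_subgroup_zero: "0 \<in> H"
    and add_subgroup_add: "x \<in> H \<Longrightarrow> y \<in> H \<Longrightarrow> x + y \<in> H"
    and add_subgroup_neg: "x \<in> H \<Longrightarrow> - x \<in> H"
  using assms unfolding add_subgroup_def by blast+

lemma add_subgroup_Int: "add_subgroup H \<Longrightarrow> add_subgroup K \<Longrightarrow> add_subgroup (H \<inter> K)"
  unfolding add_subgroup_def by blast

lemma add_subgroup_UNIV: "add_subgroup UNIV"
  unfolding add_subgroup_def by blast

lemma add_subgroup_add_span: "add_subgroup (add_span G)"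
  unfolding add_subgroup_def by (blast intro: add_span.intros)

lemma set_prod_intro: "x \<in> X \<Longrightarrow> y \<in> Y \<Longrightarrow> x * y \<in> set_prod X Y"
  unfolding set_prod_def by (rule add_span_gen) blast

lemma add_subgroup_set_prod: "add_subgroup (set_prod X Y)"
  unfolding set_prod_def by (rule add_subgroup_add_span)

lemma set_prod_induct [consumes 1, case_names mult zero add neg]:
  assumes "a \<in> set_prod X Y"
    and "\<And>x y. x \<in> X \<Longrightarrow> y \<in> Y \<Longrightarrow> Q (x * y)"
    and "Q 0" and "\<And>a b. Q a \<Longrightarrow> Q b \<Longrightarrow> Q (a + b)" and "\<And>a. Q a \<Longrightarrow> Q (- a)"
  shows "Q a"
  using assms(1) unfolding set_prod_def
  by (induction rule: add_span.induct) (use assms(2-) in auto)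

lemma set_prod_mult_left:
  fixes l :: "'b::ring"
  assumes "a \<in> set_prod X Y" "\<And>x. x \<in> X \<Longrightarrow> l * x \<in> X'"
  shows "l * a \<in> set_prod X' Y"
  using assms(1)
proof (induction rule: set_prod_induct)
  case (mult x y)
  then show ?case using assms(2) set_prod_intro by (metis mult.assoc)
qed (simp_all add: distrib_left add_subgroupD[OF add_subgroup_set_prod])

lemma set_prod_mult_right:
  fixes r :: "'b::ring"
  assumes "a \<in> set_prod X Y" "\<And>y. y \<in> Y \<Longrightarrow> y * r \<in> Y'"
  shows "a * r \<in> set_prod X Y'"
  using assms(1)
proof (induction rule: set_prod_induct)
  case (mult x y)
  then show ?case using assms(2) set_prod_intro by (metis mult.assoc)
qed (simp_all add: distrib_right add_subgroupD[OF add_subgroup_set_prod])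

lemma add_subgroup_Z_graded: "Z_graded Bg \<Longrightarrow> add_subgroup (Bg i)"
  unfolding Z_graded_def add_subgroup_def by blast

lemma Z_graded_mult:
  assumes "Z_graded Bg" "x \<in> Bg i" "y \<in> Bg j" "i + j = k"
  shows "x * y \<in> Bg k"
  using assms unfolding Z_graded_def by blast

lemma Z_graded_Sum_any_homogeneous:
  assumes gr: "Z_graded Bg" and fin: "finite {i. c i \<noteq> 0}" and c: "\<And>i. c i \<in> Bg i"
    and hom: "Sum_any c \<in> Bg k"
  shows "c k = Sum_any c"
proof -
  define c' where "c' i = c i + (if i = k then - Sum_any c else 0)" for i
  have fin_delta: "finite {i. (if i = k then - Sum_any c else 0) \<noteq> 0}"
    by (rule finite_subset[of _ "{k}"]) auto
  have "finite {i. c' i \<noteq> 0}"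
    by (rule finite_subset[of _ "insert k {i. c i \<noteq> 0}"]) (use fin in \<open>auto simp: c'_def\<close>)
  moreover have "c' i \<in> Bg i" for i
    using c hom add_subgroupD[OF add_subgroup_Z_graded[OF gr]] by (simp add: c'_def)
  moreover have "Sum_any c' = 0"
    unfolding c'_def Sum_any.distrib[OF fin fin_delta] by simp
  ultimately have "c' k = 0"
    using gr unfolding Z_graded_def Sum_any.expand_set by blast
  then show ?thesis by (simp add: c'_def)
qed

lemma add_span_Sum_any_decomposition:
  assumes "x \<in> add_span (\<Union>d. M d)" and M: "\<And>d. add_subgroup (M d)"
  shows "\<exists>c. finite {i. c i \<noteq> 0} \<and> (\<forall>i. c i \<in> M i) \<and> x = Sum_any c"
  using assms(1)
proof (induction rule: add_span.induct)
  case (add_span_gen x)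
  then obtain d where "x \<in> M d" by blast
  then show ?case
    by (intro exI[of _ "\<lambda>i. if i = d then x else 0"])
       (auto intro: finite_subset[of _ "{d}"] simp: add_subgroup_zero[OF M])
next
  case add_span_zero
  show ?case by (intro exI[of _ "\<lambda>i. 0"]) (simp add: add_subgroup_zero[OF M])
next
  case (add_span_add x y)
  then obtain c c' where
    "finite {i. c i \<noteq> 0}" "\<forall>i. c i \<in> M i" "x = Sum_any c"
    "finite {i. c' i \<noteq> 0}" "\<forall>i. c' i \<in> M i" "y = Sum_any c'" by blast
  then show ?case
    by (intro exI[of _ "\<lambda>i. c i + c' i"])
       (auto intro: finite_subset[of _ "{i. c i \<noteq> 0} \<union> {i. c' i \<noteq> 0}"]
             simp: Sum_any.distrib add_subgroup_add[OF M])
next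
  case (add_span_neg x)
  then obtain c where "finite {i. c i \<noteq> 0}" "\<forall>i. c i \<in> M i" "x = Sum_any c" by blast
  then show ?case
    by (intro exI[of _ "\<lambda>i. - c i"]) (simp add: Sum_any.expand_set sum_negf add_subgroup_neg[OF M])
qed

lemma Z_graded_component_of_add_span:
  assumes gr: "Z_graded Bg" and M: "\<And>d. M d \<subseteq> Bg d" "\<And>d. add_subgroup (M d)"
    and x: "x \<in> add_span (\<Union>d. M d)" "x \<in> Bg k"
  shows "x \<in> M k"
proof -
  obtain c where c: "finite {i. c i \<noteq> 0}" "\<And>i. c i \<in> M i" "x = Sum_any c"
    using add_span_Sum_any_decomposition[OF x(1) M(2)] by blast
  have "c k = x"
    using Z_graded_Sum_any_homogeneous[OF gr c(1) _ x(2)[unfolded c(3)]] c(2,3) M(1) by blast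
  then show ?thesis using c(2) by metis
qed

lemma subring_gen_mult_left_closed:
  assumes H: "add_subgroup H" and G: "\<And>g h. g \<in> G \<Longrightarrow> h \<in> H \<Longrightarrow> g * h \<in> H"
    and "x \<in> subring_gen G" "h \<in> H"
  shows "x * h \<in> H"
  using assms(3,4)
  by (induction arbitrary: h rule: subring_gen.induct)
     (auto simp: G add_subgroupD[OF H] distrib_right mult.assoc)

lemma subring_gen_mult_right_closed:
  assumes H: "add_subgroup H" and G: "\<And>g h. g \<in> G \<Longrightarrow> h \<in> H \<Longrightarrow> h * g \<in> H"
    and "x \<in> subring_gen G" "h \<in> H"
  shows "h * x \<in> H"
  using assms(3,4)
  by (induction arbitrary: h rule: subring_gen.induct)
     (auto simp: G add_subgroupD[OF H] distrib_left simp flip: mult.assoc)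

lemma subring_gen_left_unit:
  assumes "\<And>g. g \<in> G \<Longrightarrow> e * g = g" "x \<in> subring_gen G"
  shows "e * x = x"
  using assms(2) by induction (simp_all add: assms(1) distrib_left flip: mult.assoc)

lemma subring_gen_right_unit:
  assumes "\<And>g. g \<in> G \<Longrightarrow> g * e = g" "x \<in> subring_gen G"
  shows "x * e = x"
  using assms(2) by induction (simp_all add: assms(1) distrib_right mult.assoc)

lemma Z_graded_component_subset_left:
  assumes gr: "Z_graded Bg" and gen: "subring_gen G = UNIV"
    and M: "\<And>d. M d \<subseteq> Bg d" "\<And>d. add_subgroup (M d)"
    and act: "\<And>g. g \<in> G \<Longrightarrow> \<exists>d. \<forall>j. \<forall>z\<in>M j. g * z \<in> M (d + j)"
    and e: "e \<in> M 0" "\<And>x. x * e = x"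
  shows "Bg k \<subseteq> M k"
proof
  fix x assume x: "x \<in> Bg k"
  let ?H = "add_span (\<Union>d. M d)"
  have "g * h \<in> ?H" if "g \<in> G" "h \<in> ?H" for g h
  proof -
    obtain d where d: "\<forall>j. \<forall>z\<in>M j. g * z \<in> M (d + j)" using act \<open>g \<in> G\<close> by blast
    show ?thesis using \<open>h \<in> ?H\<close>
    proof (induction rule: add_span.induct)
      case (add_span_gen z)
      then obtain j where "z \<in> M j" by blast
      then have "g * z \<in> M (d + j)" using d by blast
      then show ?case by (blast intro: add_span.add_span_gen)
    qed (simp_all add: distrib_left add_subgroupD[OF add_subgroup_add_span])
  qed
  moreover have "e \<in> ?H" using e(1) by (blast intro: add_span_gen)
  ultimately have "x * e \<in> ?H"
    using subring_gen_mult_left_closed[OF add_subgroup_add_span] gen by blast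
  then show "x \<in> M k"
    using Z_graded_component_of_add_span[OF gr M] x e(2) by simp
qed

lemma Z_graded_component_subset_right:
  assumes gr: "Z_graded Bg" and gen: "subring_gen G = UNIV"
    and M: "\<And>d. M d \<subseteq> Bg d" "\<And>d. add_subgroup (M d)"
    and act: "\<And>g. g \<in> G \<Longrightarrow> \<exists>d. \<forall>j. \<forall>z\<in>M j. z * g \<in> M (j + d)"
    and e: "e \<in> M 0" "\<And>x. e * x = x"
  shows "Bg k \<subseteq> M k"
proof
  fix x assume x: "x \<in> Bg k"
  let ?H = "add_span (\<Union>d. M d)"
  have "h * g \<in> ?H" if "g \<in> G" "h \<in> ?H" for g h
  proof -
    obtain d where d: "\<forall>j. \<forall>z\<in>M j. z * g \<in> M (j + d)" using act \<open>g \<in> G\<close> by blast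
    show ?thesis using \<open>h \<in> ?H\<close>
    proof (induction rule: add_span.induct)
      case (add_span_gen z)
      then obtain j where "z \<in> M j" by blast
      then have "z * g \<in> M (j + d)" using d by blast
      then show ?case by (blast intro: add_span.add_span_gen)
    qed (simp_all add: distrib_right add_subgroupD[OF add_subgroup_add_span])
  qed
  moreover have "e \<in> ?H" using e(1) by (blast intro: add_span_gen)
  ultimately have "e * x \<in> ?H"
    using subring_gen_mult_right_closed[OF add_subgroup_add_span] gen by blast
  then show "x \<in> M k"
    using Z_graded_component_of_add_span[OF gr M] x e(2) by simp
qed

subsection \<open>One-sided ideals generated by powers of a subset\<close>

primrec right_ideal_power :: "'b::ring set \<Rightarrow> nat \<Rightarrow> 'b set" where
  "right_ideal_power X 0 = UNIV"
| "right_ideal_power X (Suc k) = set_prod X (right_ideal_power X k)"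

primrec left_ideal_power :: "'b::ring set \<Rightarrow> nat \<Rightarrow> 'b set" where
  "left_ideal_power X 0 = UNIV"
| "left_ideal_power X (Suc k) = set_prod (left_ideal_power X k) X"

lemma add_subgroup_right_ideal_power: "add_subgroup (right_ideal_power X k)"
  by (cases k) (simp_all add: add_subgroup_UNIV add_subgroup_set_prod)

lemma add_subgroup_left_ideal_power: "add_subgroup (left_ideal_power X k)"
  by (cases k) (simp_all add: add_subgroup_UNIV add_subgroup_set_prod)

lemma right_ideal_power_mult_left:
  assumes "\<And>x. x \<in> X \<Longrightarrow> l * x \<in> X" "w \<in> right_ideal_power X k"
  shows "l * w \<in> right_ideal_power X k"
  using assms by (cases k) (simp_all add: set_prod_mult_left)

lemma left_ideal_power_mult_right:
  assumes "\<And>x. x \<in> X \<Longrightarrow> x * r \<in> X" "w \<in> left_ideal_power X k"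
  shows "w * r \<in> left_ideal_power X k"
  using assms by (cases k) (simp_all add: set_prod_mult_right)

subsection \<open>Epsilon-strong gradings from local units\<close>

lemma right_unit_from_left_unit:
  fixes e :: "'b::ring"
  assumes "a \<in> set_prod X Y" "\<And>x. x \<in> X' \<Longrightarrow> a * x = x"
    and "\<And>z. z \<in> set_prod Y X' \<Longrightarrow> z * e = z" and "x \<in> X'"
  shows "x * e = x"
proof -
  have "a * x * e = a * x"
    using assms(1)
  proof (induction rule: set_prod_induct)
    case (mult x' y)
    then show ?case using assms(3)[OF set_prod_intro[OF _ assms(4)]] by (simp add: mult.assoc)
  qed (simp_all add: distrib_right)
  then show ?thesis using assms(2,4) by simp
qed

lemma left_unit_from_right_unit:
  fixes e :: "'b::ring"
  assumes "b \<in> set_prod X Y" "\<And>y. y \<in> Y' \<Longrightarrow> y * b = y"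
    and "\<And>z. z \<in> set_prod Y' X \<Longrightarrow> e * z = z" and "y \<in> Y'"
  shows "e * y = y"
proof -
  have "e * (y * b) = y * b"
    using assms(1)
  proof (induction rule: set_prod_induct)
    case (mult x y')
    then show ?case using assms(3)[OF set_prod_intro[OF assms(4)]] by (simp flip: mult.assoc)
  qed (simp_all add: distrib_left)
  then show ?thesis using assms(2,4) by simp
qed

lemma epsilon_strongly_graded_if_local_units:
  assumes gr: "Z_graded Bg"
    and left: "\<And>k::nat. \<exists>a\<in>set_prod (Bg (int k)) (Bg (- int k)). \<forall>x\<in>Bg (int k). a * x = x"
    and right: "\<And>k::nat. \<exists>b\<in>set_prod (Bg (int k)) (Bg (- int k)). \<forall>x\<in>Bg (- int k). x * b = x"
    and unital: "\<And>k::nat. has_unit (set_prod (Bg (- int k)) (Bg (int k)))"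
  shows "epsilon_strongly_graded Bg"
  unfolding epsilon_strongly_graded_def
proof (intro conjI gr allI)
  fix i :: int
  show "\<exists>a\<in>set_prod (Bg i) (Bg (- i)). \<exists>b\<in>set_prod (Bg (- i)) (Bg i).
          \<forall>x\<in>Bg i. a * x = x \<and> x * b = x"
  proof (cases i rule: int_cases2)
    case (nonneg k)
    note i = this
    obtain a where a: "a \<in> set_prod (Bg (int k)) (Bg (- int k))" "\<forall>x\<in>Bg (int k). a * x = x"
      using left by blast
    obtain e where e: "e \<in> set_prod (Bg (- int k)) (Bg (int k))"
        "\<forall>z\<in>set_prod (Bg (- int k)) (Bg (int k)). z * e = z"
      using unital unfolding has_unit_def by blast
    have "x * e = x" if "x \<in> Bg (int k)" for x
      by (rule right_unit_from_left_unit[OF a(1)]) (use a(2) e(2) that in auto)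
    then show ?thesis unfolding i using a(2) by (intro bexI[OF _ a(1)] bexI[OF _ e(1)]) simp
  next
    case (nonpos k)
    note i = this
    obtain b where b: "b \<in> set_prod (Bg (int k)) (Bg (- int k))" "\<forall>x\<in>Bg (- int k). x * b = x"
      using right by blast
    obtain e where e: "e \<in> set_prod (Bg (- int k)) (Bg (int k))"
        "\<forall>z\<in>set_prod (Bg (- int k)) (Bg (int k)). e * z = z"
      using unital unfolding has_unit_def by blast
    have "e * x = x" if "x \<in> Bg (- int k)" for x
      by (rule left_unit_from_right_unit[OF b(1)]) (use b(2) e(2) that in auto)
    then show ?thesis
      unfolding i minus_minus using b(2) by (intro bexI[OF _ e(1)] bexI[OF _ b(1)]) simp
  qed
qed

subsection \<open>Covariant representations satisfying Condition (FS')\<close>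

locale FS_graded_rep =
  fixes lP :: "'r::ring_1 \<Rightarrow> 'p::ab_group_add \<Rightarrow> 'p" and rP :: "'p \<Rightarrow> 'r \<Rightarrow> 'p"
    and lQ :: "'r \<Rightarrow> 'q::ab_group_add \<Rightarrow> 'q" and rQ :: "'q \<Rightarrow> 'r \<Rightarrow> 'q"
    and \<psi> :: "'p \<Rightarrow> 'q \<Rightarrow> 'r"
    and S :: "'p \<Rightarrow> 'b::ring" and T :: "'q \<Rightarrow> 'b" and \<sigma> :: "'r \<Rightarrow> 'b"
    and Bg :: "int \<Rightarrow> 'b set"
  assumes system: "unital_R_system lP rP lQ rQ \<psi>"
    and rep: "graded_covariant_rep lP rP lQ rQ \<psi> S T \<sigma> Bg"
    and FS: "condition_FS' lP rQ \<psi>"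
begin

lemma graded: "Z_graded Bg"
  and generated: "subring_gen (range \<sigma> \<union> range S \<union> range T) = UNIV"
  and degree_sigma: "\<sigma> r \<in> Bg 0" and degree_T: "T q \<in> Bg 1" and degree_S: "S p \<in> Bg (- 1)"
  using rep unfolding graded_covariant_rep_def by auto

lemma S_add: "S (p + p') = S p + S p'"
  and T_add: "T (q + q') = T q + T q'"
  and sigma_mult: "\<sigma> (a * b) = \<sigma> a * \<sigma> b"
  and S_rP: "S (rP p a) = S p * \<sigma> a" and S_lP: "S (lP a p) = \<sigma> a * S p"
  and T_rQ: "T (rQ q a) = T q * \<sigma> a" and T_lQ: "T (lQ a q) = \<sigma> a * T q"
  and sigma_psi: "\<sigma> (\<psi> p q) = S p * T q"
  using rep unfolding graded_covariant_rep_def covariant_rep_def by simp_all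

lemma lP_one: "lP 1 p = p" and rP_one: "rP p 1 = p"
  and lQ_one: "lQ 1 q = q" and rQ_one: "rQ q 1 = q"
  using system unfolding unital_R_system_def unital_bimodule_def by simp_all

lemma S_zero: "S 0 = 0" and S_minus: "S (- p) = - S p"
  using S_add[of 0 0] S_add[of "- p" p] by (simp_all add: eq_neg_iff_add_eq_0)

lemma T_zero: "T 0 = 0" and T_minus: "T (- q) = - T q"
  using T_add[of 0 0] T_add[of "- q" q] by (simp_all add: eq_neg_iff_add_eq_0)

lemma sigma_one_left_unit: "\<sigma> 1 * x = x"
  by (rule subring_gen_left_unit[of "range \<sigma> \<union> range S \<union> range T"])
     (auto simp: generated lP_one lQ_one simp flip: sigma_mult S_lP T_lQ)

lemma sigma_one_right_unit: "x * \<sigma> 1 = x"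
  by (rule subring_gen_right_unit[of "range \<sigma> \<union> range S \<union> range T"])
     (auto simp: generated rP_one rQ_one simp flip: sigma_mult S_rP T_rQ)

lemma sigma_mult_right_ideal_power:
  "w \<in> right_ideal_power (range T) k \<Longrightarrow> \<sigma> r * w \<in> right_ideal_power (range T) k"
  by (rule right_ideal_power_mult_left) (auto simp flip: T_lQ)

lemma left_ideal_power_mult_sigma:
  "w \<in> left_ideal_power (range S) k \<Longrightarrow> w * \<sigma> r \<in> left_ideal_power (range S) k"
  by (rule left_ideal_power_mult_right) (auto simp flip: S_rP)

lemma S_mult_right_ideal_power:
  assumes "w \<in> right_ideal_power (range T) (Suc k)"
  shows "S p * w \<in> right_ideal_power (range T) k"
  using assms[simplified]
proof (induction rule: set_prod_induct)
  case (mult t y)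
  then obtain q where "t = T q" by blast
  then have "S p * (t * y) = \<sigma> (\<psi> p q) * y" by (simp add: sigma_psi mult.assoc)
  then show ?case using mult(2) sigma_mult_right_ideal_power by simp
qed (simp_all add: distrib_left add_subgroupD[OF add_subgroup_right_ideal_power])

lemma left_ideal_power_mult_T:
  assumes "w \<in> left_ideal_power (range S) (Suc k)"
  shows "w * T q \<in> left_ideal_power (range S) k"
  using assms[simplified]
proof (induction rule: set_prod_induct)
  case (mult y s)
  then obtain p where "s = S p" by blast
  then have "y * s * T q = y * \<sigma> (\<psi> p q)" by (simp add: sigma_psi mult.assoc)
  then show ?case using mult(1) left_ideal_power_mult_sigma by simp
qed (simp_all add: distrib_right add_subgroupD[OF add_subgroup_left_ideal_power])

lemma component_subset_right_ideal_power: "Bg (int k) \<subseteq> right_ideal_power (range T) k"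
proof -
  \<comment> \<open>In negative degrees \<open>nat d = 0\<close>, so \<open>M d = Bg d\<close> there.\<close>
  define M where "M d = Bg d \<inter> right_ideal_power (range T) (nat d)" for d
  have "Bg (int k) \<subseteq> M (int k)"
  proof (rule Z_graded_component_subset_left[OF graded generated])
    show "add_subgroup (M d)" for d
      unfolding M_def by (intro add_subgroup_Int add_subgroup_Z_graded[OF graded]
                                 add_subgroup_right_ideal_power)
    show "\<sigma> 1 \<in> M 0" by (simp add: M_def degree_sigma)
    fix g assume "g \<in> range \<sigma> \<union> range S \<union> range T"
    then show "\<exists>d. \<forall>j. \<forall>z\<in>M j. g * z \<in> M (d + j)"
    proof (elim UnE imageE)
      fix r assume "g = \<sigma> r"
      then show ?thesis
        by (intro exI[of _ 0]) (auto simp: M_def sigma_mult_right_ideal_power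
                                     intro: Z_graded_mult[OF graded degree_sigma])
    next
      fix p assume g: "g = S p"
      have "S p * z \<in> right_ideal_power (range T) (nat (- 1 + j))"
        if "z \<in> right_ideal_power (range T) (nat j)" for z j
        using that S_mult_right_ideal_power[of z "nat (j - 1)" p]
        by (cases "j \<ge> 1") (simp_all add: Suc_nat_eq_nat_zadd1)
      then show ?thesis
        by (intro exI[of _ "- 1"]) (auto simp: M_def g intro: Z_graded_mult[OF graded degree_S])
    next
      fix q assume g: "g = T q"
      have "T q * z \<in> right_ideal_power (range T) (nat (1 + j))"
        if "z \<in> right_ideal_power (range T) (nat j)" for z j
        using that set_prod_intro[of "T q" "range T" z]
        by (cases "j \<ge> 0") (simp_all add: nat_add_distrib)
      then show ?thesis
        by (intro exI[of _ 1]) (auto simp: M_def g intro: Z_graded_mult[OF graded degree_T])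
    qed
  qed (auto simp: M_def sigma_one_right_unit)
  then show ?thesis by (simp add: M_def)
qed

lemma component_subset_left_ideal_power: "Bg (- int k) \<subseteq> left_ideal_power (range S) k"
proof -
  define M where "M d = Bg d \<inter> left_ideal_power (range S) (nat (- d))" for d
  have "Bg (- int k) \<subseteq> M (- int k)"
  proof (rule Z_graded_component_subset_right[OF graded generated])
    show "add_subgroup (M d)" for d
      unfolding M_def by (intro add_subgroup_Int add_subgroup_Z_graded[OF graded]
                                 add_subgroup_left_ideal_power)
    show "\<sigma> 1 \<in> M 0" by (simp add: M_def degree_sigma)
    fix g assume "g \<in> range \<sigma> \<union> range S \<union> range T"
    then show "\<exists>d. \<forall>j. \<forall>z\<in>M j. z * g \<in> M (j + d)"
    proof (elim UnE imageE)
      fix r assume "g = \<sigma> r"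
      then show ?thesis
        by (intro exI[of _ 0]) (auto simp: M_def left_ideal_power_mult_sigma
                                     intro: Z_graded_mult[OF graded _ degree_sigma])
    next
      fix p assume g: "g = S p"
      have "z * S p \<in> left_ideal_power (range S) (nat (- (j + - 1)))"
        if "z \<in> left_ideal_power (range S) (nat (- j))" for z j
      proof (cases "j \<le> 0")
        case True
        then have "nat (- (j + - 1)) = Suc (nat (- j))" by simp
        then show ?thesis using that by (simp add: set_prod_intro)
      qed simp
      then show ?thesis
        by (intro exI[of _ "- 1"]) (auto simp: M_def g intro: Z_graded_mult[OF graded _ degree_S])
    next
      fix q assume g: "g = T q"
      have "z * T q \<in> left_ideal_power (range S) (nat (- (j + 1)))"
        if "z \<in> left_ideal_power (range S) (nat (- j))" for z j
        using that left_ideal_power_mult_T[of z "nat (- j - 1)" q]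
        by (cases "j \<le> - 1") (simp_all add: Suc_nat_eq_nat_zadd1)
      then show ?thesis
        by (intro exI[of _ 1]) (auto simp: M_def g intro: Z_graded_mult[OF graded _ degree_T])
    qed
  qed (auto simp: M_def sigma_one_left_unit)
  then show ?thesis by (simp add: M_def)
qed

lemma F_P_Q_acts_through_T:
  "f \<in> F_P_Q rQ \<psi> \<Longrightarrow> \<exists>u\<in>set_prod (range T) (range S). \<forall>q. u * T q = T (f q)"
  unfolding F_P_Q_def
proof (induction rule: fun_span.induct)
  case (fun_span_gen f)
  then obtain q p where "f = (\<lambda>x. rQ q (\<psi> p x))" by blast
  then show ?case
    by (intro bexI[of _ "T q * S p"] set_prod_intro) (simp_all add: T_rQ sigma_psi mult.assoc)
next
  case fun_span_zero
  show ?case by (intro bexI[of _ 0]) (simp_all add: T_zero add_subgroup_zero[OF add_subgroup_set_prod])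
next
  case (fun_span_add f g)
  then obtain u u' where "u \<in> set_prod (range T) (range S)" "\<forall>q. u * T q = T (f q)"
    "u' \<in> set_prod (range T) (range S)" "\<forall>q. u' * T q = T (g q)" by blast
  then show ?case
    by (intro bexI[of _ "u + u'"]) (simp_all add: distrib_right T_add add_subgroup_add[OF add_subgroup_set_prod])
next
  case (fun_span_neg f)
  then obtain u where "u \<in> set_prod (range T) (range S)" "\<forall>q. u * T q = T (f q)" by blast
  then show ?case
    by (intro bexI[of _ "- u"]) (simp_all add: T_minus add_subgroup_neg[OF add_subgroup_set_prod])
qed

lemma F_Q_P_acts_through_S:
  "f \<in> F_Q_P lP \<psi> \<Longrightarrow> \<exists>v\<in>set_prod (range T) (range S). \<forall>p. S p * v = S (f p)"
  unfolding F_Q_P_def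
proof (induction rule: fun_span.induct)
  case (fun_span_gen f)
  then obtain p q where "f = (\<lambda>y. lP (\<psi> y q) p)" by blast
  then show ?case
    by (intro bexI[of _ "T q * S p"] set_prod_intro) (simp_all add: S_lP sigma_psi mult.assoc)
next
  case fun_span_zero
  show ?case by (intro bexI[of _ 0]) (simp_all add: S_zero add_subgroup_zero[OF add_subgroup_set_prod])
next
  case (fun_span_add f g)
  then obtain v v' where "v \<in> set_prod (range T) (range S)" "\<forall>p. S p * v = S (f p)"
    "v' \<in> set_prod (range T) (range S)" "\<forall>p. S p * v' = S (g p)" by blast
  then show ?case
    by (intro bexI[of _ "v + v'"]) (simp_all add: distrib_left S_add add_subgroup_add[OF add_subgroup_set_prod])
next
  case (fun_span_neg f)
  then obtain v where "v \<in> set_prod (range T) (range S)" "\<forall>p. S p * v = S (f p)" by blast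
  then show ?case
    by (intro bexI[of _ "- v"]) (simp_all add: S_minus add_subgroup_neg[OF add_subgroup_set_prod])
qed

lemma T_local_left_unit: "\<exists>u\<in>set_prod (range T) (range S). \<forall>q. u * T q = T q"
  using FS F_P_Q_acts_through_T unfolding condition_FS'_def by metis

lemma S_local_right_unit: "\<exists>v\<in>set_prod (range T) (range S). \<forall>p. S p * v = S p"
  using FS F_Q_P_acts_through_S unfolding condition_FS'_def by metis

lemma right_ideal_power_Suc_action:
  assumes a: "a \<in> set_prod (Bg (int k)) (Bg (- int k))"
      "\<And>w. w \<in> right_ideal_power (range T) k \<Longrightarrow> a * w = w"
    and "v \<in> set_prod (range T) (range S)"
  shows "\<exists>a'\<in>set_prod (Bg (int (Suc k))) (Bg (- int (Suc k))).
           \<forall>w\<in>right_ideal_power (range T) (Suc k). a' * w = v * w"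
  using assms(3)
proof (induction rule: set_prod_induct)
  case (mult t s)
  then obtain q p where tq: "t = T q" and sp: "s = S p" by blast
  have "t * a * s \<in> set_prod (Bg (int (Suc k))) (Bg (- int (Suc k)))"
    unfolding mult.assoc
    by (rule set_prod_mult_left[OF set_prod_mult_right[OF a(1)]])
       (auto simp: tq sp intro: Z_graded_mult[OF graded degree_T] Z_graded_mult[OF graded _ degree_S])
  moreover have "t * a * s * w = t * s * w" if "w \<in> right_ideal_power (range T) (Suc k)" for w
    using a(2)[OF S_mult_right_ideal_power[OF that]] by (simp add: sp mult.assoc)
  ultimately show ?case by blast
next
  case zero
  show ?case by (intro bexI[of _ 0]) (simp_all add: add_subgroup_zero[OF add_subgroup_set_prod])
next
  case (add v v')
  then obtain b b' where "b \<in> set_prod (Bg (int (Suc k))) (Bg (- int (Suc k)))"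
      "b' \<in> set_prod (Bg (int (Suc k))) (Bg (- int (Suc k)))"
      "\<forall>w\<in>right_ideal_power (range T) (Suc k). b * w = v * w"
      "\<forall>w\<in>right_ideal_power (range T) (Suc k). b' * w = v' * w" by blast
  then show ?case
    by (intro bexI[of _ "b + b'"]) (simp_all add: distrib_right add_subgroup_add[OF add_subgroup_set_prod])
next
  case (neg v)
  then obtain b where "b \<in> set_prod (Bg (int (Suc k))) (Bg (- int (Suc k)))"
      "\<forall>w\<in>right_ideal_power (range T) (Suc k). b * w = v * w" by blast
  then show ?case
    by (intro bexI[of _ "- b"]) (simp_all add: add_subgroup_neg[OF add_subgroup_set_prod])
qed

lemma left_ideal_power_Suc_action:
  assumes b: "b \<in> set_prod (Bg (int k)) (Bg (- int k))"
      "\<And>w. w \<in> left_ideal_power (range S) k \<Longrightarrow> w * b = w"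
    and "v \<in> set_prod (range T) (range S)"
  shows "\<exists>b'\<in>set_prod (Bg (int (Suc k))) (Bg (- int (Suc k))).
           \<forall>w\<in>left_ideal_power (range S) (Suc k). w * b' = w * v"
  using assms(3)
proof (induction rule: set_prod_induct)
  case (mult t s)
  then obtain q p where tq: "t = T q" and sp: "s = S p" by blast
  have "t * b * s \<in> set_prod (Bg (int (Suc k))) (Bg (- int (Suc k)))"
    unfolding mult.assoc
    by (rule set_prod_mult_left[OF set_prod_mult_right[OF b(1)]])
       (auto simp: tq sp intro: Z_graded_mult[OF graded degree_T] Z_graded_mult[OF graded _ degree_S])
  moreover have "w * (t * b * s) = w * (t * s)" if "w \<in> left_ideal_power (range S) (Suc k)" for w
    using b(2)[OF left_ideal_power_mult_T[OF that]] by (simp add: tq flip: mult.assoc)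
  ultimately show ?case by blast
next
  case zero
  show ?case by (intro bexI[of _ 0]) (simp_all add: add_subgroup_zero[OF add_subgroup_set_prod])
next
  case (add v v')
  then obtain c c' where "c \<in> set_prod (Bg (int (Suc k))) (Bg (- int (Suc k)))"
      "c' \<in> set_prod (Bg (int (Suc k))) (Bg (- int (Suc k)))"
      "\<forall>w\<in>left_ideal_power (range S) (Suc k). w * c = w * v"
      "\<forall>w\<in>left_ideal_power (range S) (Suc k). w * c' = w * v'" by blast
  then show ?case
    by (intro bexI[of _ "c + c'"]) (simp_all add: distrib_left add_subgroup_add[OF add_subgroup_set_prod])
next
  case (neg v)
  then obtain c where "c \<in> set_prod (Bg (int (Suc k))) (Bg (- int (Suc k)))"
      "\<forall>w\<in>left_ideal_power (range S) (Suc k). w * c = w * v" by blast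
  then show ?case
    by (intro bexI[of _ "- c"]) (simp_all add: add_subgroup_neg[OF add_subgroup_set_prod])
qed

lemma right_ideal_power_local_left_unit:
  "\<exists>a\<in>set_prod (Bg (int k)) (Bg (- int k)). \<forall>w\<in>right_ideal_power (range T) k. a * w = w"
proof (induction k)
  case 0
  show ?case
    using set_prod_intro[OF degree_sigma degree_sigma, of 1 1]
    by (intro bexI[of _ "\<sigma> 1 * \<sigma> 1"]) (simp_all add: sigma_one_left_unit)
next
  case (Suc k)
  obtain a where "a \<in> set_prod (Bg (int k)) (Bg (- int k))"
    "\<forall>w\<in>right_ideal_power (range T) k. a * w = w" using Suc.IH by blast
  moreover obtain u where u: "u \<in> set_prod (range T) (range S)" "\<forall>q. u * T q = T q"
    using T_local_left_unit by blast
  ultimately obtain a' where a': "a' \<in> set_prod (Bg (int (Suc k))) (Bg (- int (Suc k)))"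
    "\<forall>w\<in>right_ideal_power (range T) (Suc k). a' * w = u * w"
    using right_ideal_power_Suc_action by blast
  have "u * w = w" if "w \<in> right_ideal_power (range T) (Suc k)" for w
    using that[simplified]
    by (induction rule: set_prod_induct) (auto simp: u(2) distrib_left simp flip: mult.assoc)
  then show ?case using a' by auto
qed

lemma left_ideal_power_local_right_unit:
  "\<exists>b\<in>set_prod (Bg (int k)) (Bg (- int k)). \<forall>w\<in>left_ideal_power (range S) k. w * b = w"
proof (induction k)
  case 0
  show ?case
    using set_prod_intro[OF degree_sigma degree_sigma, of 1 1]
    by (intro bexI[of _ "\<sigma> 1 * \<sigma> 1"]) (simp_all add: sigma_one_right_unit flip: mult.assoc)
next
  case (Suc k)
  obtain b where "b \<in> set_prod (Bg (int k)) (Bg (- int k))"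
    "\<forall>w\<in>left_ideal_power (range S) k. w * b = w" using Suc.IH by blast
  moreover obtain v where v: "v \<in> set_prod (range T) (range S)" "\<forall>p. S p * v = S p"
    using S_local_right_unit by blast
  ultimately obtain b' where b': "b' \<in> set_prod (Bg (int (Suc k))) (Bg (- int (Suc k)))"
    "\<forall>w\<in>left_ideal_power (range S) (Suc k). w * b' = w * v"
    using left_ideal_power_Suc_action by blast
  have "w * v = w" if "w \<in> left_ideal_power (range S) (Suc k)" for w
    using that[simplified]
    by (induction rule: set_prod_induct) (auto simp: v(2) distrib_right mult.assoc)
  then show ?case using b' by auto
qed

lemma component_local_left_unit:
  "\<exists>a\<in>set_prod (Bg (int k)) (Bg (- int k)). \<forall>x\<in>Bg (int k). a * x = x"
  using right_ideal_power_local_left_unit component_subset_right_ideal_power by blast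

lemma component_local_right_unit:
  "\<exists>b\<in>set_prod (Bg (int k)) (Bg (- int k)). \<forall>x\<in>Bg (- int k). x * b = x"
  using left_ideal_power_local_right_unit component_subset_left_ideal_power by blast

end

theorem mainTheorem9:
  fixes lP :: "'r::ring_1 \<Rightarrow> 'p::ab_group_add \<Rightarrow> 'p" and rP :: "'p \<Rightarrow> 'r \<Rightarrow> 'p"
    and lQ :: "'r \<Rightarrow> 'q::ab_group_add \<Rightarrow> 'q" and rQ :: "'q \<Rightarrow> 'r \<Rightarrow> 'q"
    and \<psi> :: "'p \<Rightarrow> 'q \<Rightarrow> 'r"
    and S :: "'p \<Rightarrow> 'b::ring" and T :: "'q \<Rightarrow> 'b" and \<sigma> :: "'r \<Rightarrow> 'b"
    and Bg :: "int \<Rightarrow> 'b set"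
  assumes "unital_R_system lP rP lQ rQ \<psi>"
    and "semi_full_rep lP rP lQ rQ \<psi> S T \<sigma> Bg"
    and "condition_FS' lP rQ \<psi>"
    and "\<forall>k. has_unit (I_psi_sigma Bg \<sigma> rP \<psi> k)"
  shows "epsilon_strongly_graded Bg"
proof -
  have rep: "graded_covariant_rep lP rP lQ rQ \<psi> S T \<sigma> Bg"
    and semi_full: "\<And>k::nat. set_prod (Bg (- int k)) (Bg (int k)) = I_psi_sigma Bg \<sigma> rP \<psi> k"
    using assms(2) unfolding semi_full_rep_def by simp_all
  interpret FS_graded_rep lP rP lQ rQ \<psi> S T \<sigma> Bg
    using assms(1,3) rep by unfold_locales
  show ?thesis
    using epsilon_strongly_graded_if_local_units[OF graded component_local_left_unit
        component_local_right_unit] assms(4) semi_full by simp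
qed

end
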